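(* Let $n\ge2$ and $\Delta\subset B_n$ a proper ideal. The face numbers $f_j(\mathrm{Bier}(B_n,\Delta))$, $0\le j\le n-1$, depend only on $n$ and the differences $f_i(\Delta)-f_{n-i}(\Delta)$, $0\le i\le\lfloor\frac{n-1}2\rfloor$.
   Context: $B_n$ is the Boolean lattice of subsets of $[1,n]$. A proper ideal $\Delta\subset B_n$ is a nonempty family of subsets of $[1,n]$ closed under taking subsets with $[1,n]\notin\Delta$; $f_i(\Delta)$ is the number of sets of cardinality $i$ in $\Delta$. The Bier sphere $\mathrm{Bier}(B_n,\Delta)$ is the simplicial complex whose faces are the pairs $(B,C)$ with $B\subsetneq C\subseteq[1,n]$, $B\in\Delta$, $C\notin\Delta$, with $(B',C')$ a face of $(B,C)$ iff $B'\subseteq B$ and $C\subseteq C'$; the face $(B,C)$ has $|B|+n-|C|$ vertices. $f_j(\mathrm{Bier}(B_n,\Delta))$ is its number of faces with $j$ vertices. *)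

theory Defs
  imports Main
begin

definition proper_ideal :: "nat \<Rightarrow> nat set set \<Rightarrow> bool" where
  "proper_ideal n D \<longleftrightarrow> D \<subseteq> Pow {1..n} \<and> D \<noteq> {} \<and>
     (\<forall>A\<in>D. \<forall>B. B \<subseteq> A \<longrightarrow> B \<in> D) \<and> {1..n} \<notin> D"

definition ideal_f :: "nat set set \<Rightarrow> nat \<Rightarrow> nat" where
  "ideal_f D i = card {A \<in> D. card A = i}"

definition bier_faces :: "nat \<Rightarrow> nat set set \<Rightarrow> (nat set \<times> nat set) set" where
  "bier_faces n D = {(B, C). B \<subset> C \<and> C \<subseteq> {1..n} \<and> B \<in> D \<and> C \<notin> D}"

definition bier_face_vertices :: "nat \<Rightarrow> nat set \<times> nat set \<Rightarrow> nat" where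
  "bier_face_vertices n F = card (fst F) + n - card (snd F)"

definition bier_f :: "nat \<Rightarrow> nat set set \<Rightarrow> nat \<Rightarrow> nat" where
  "bier_f n D j = card {F \<in> bier_faces n D. bier_face_vertices n F = j}"

end

theory Submission
  imports Defs
begin

text \<open>A face of \<open>Bier(B\<^sub>n, \<Delta>)\<close> with \<open>j < n\<close> vertices is a pair \<open>B \<subset> C\<close> with
  \<open>|C| - |B| = k = n - j\<close>, \<open>B \<in> \<Delta>\<close> and \<open>C \<notin> \<Delta>\<close>. Counting all such pairs with \<open>B \<in> \<Delta>\<close> and
  subtracting those with \<open>C \<in> \<Delta>\<close> (which have \<open>B \<in> \<Delta>\<close> automatically, \<open>\<Delta>\<close> being an ideal) gives
  \<open>f\<^sub>j = \<Sum>\<^sub>i f\<^sub>i(\<Delta>) (C(n-i,k) - C(i,k))\<close>. The coefficient changes sign under \<open>i \<mapsto> n - i\<close>,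
  so the sum only sees the differences \<open>f\<^sub>i(\<Delta>) - f\<^sub>n\<^sub>-\<^sub>i(\<Delta>)\<close>.\<close>

lemma card_supersets_with_card:
  assumes "finite S" and "B \<subseteq> S"
  shows "card {C. B \<subseteq> C \<and> C \<subseteq> S \<and> card C = card B + k} = (card S - card B) choose k"
proof -
  have "finite B"
    using assms finite_subset by blast
  have "bij_betw (\<lambda>X. B \<union> X) {X. X \<subseteq> S - B \<and> card X = k}
      {C. B \<subseteq> C \<and> C \<subseteq> S \<and> card C = card B + k}"
  proof (rule bij_betw_byWitness[where f' = "\<lambda>C. C - B"])
    show "(\<lambda>X. B \<union> X) ` {X. X \<subseteq> S - B \<and> card X = k}
        \<subseteq> {C. B \<subseteq> C \<and> C \<subseteq> S \<and> card C = card B + k}"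
    proof clarify
      fix X assume "X \<subseteq> S - B"
      then have "finite X" and "B \<inter> X = {}"
        using assms finite_subset by blast+
      with \<open>finite B\<close> \<open>X \<subseteq> S - B\<close> assms(2)
      show "B \<subseteq> B \<union> X \<and> B \<union> X \<subseteq> S \<and> card (B \<union> X) = card B + card X"
        by (auto simp: card_Un_disjoint)
    qed
    show "(\<lambda>C. C - B) ` {C. B \<subseteq> C \<and> C \<subseteq> S \<and> card C = card B + k}
        \<subseteq> {X. X \<subseteq> S - B \<and> card X = k}"
      using \<open>finite B\<close> by (auto simp: card_Diff_subset)
  qed auto
  then have "card {C. B \<subseteq> C \<and> C \<subseteq> S \<and> card C = card B + k}
      = card {X. X \<subseteq> S - B \<and> card X = k}"
    by (simp add: bij_betw_same_card)
  also have "\<dots> = (card S - card B) choose k"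
    using assms by (simp add: n_subsets card_Diff_subset \<open>finite B\<close>)
  finally show ?thesis .
qed

lemma card_subsets_with_codim:
  assumes "finite C"
  shows "card {B. B \<subseteq> C \<and> card C = card B + k} = card C choose k"
proof (cases "k \<le> card C")
  case True
  then have "{B. B \<subseteq> C \<and> card C = card B + k} = {B. B \<subseteq> C \<and> card B = card C - k}"
    by auto
  with True show ?thesis
    using n_subsets[OF assms, of "card C - k"] by (simp add: binomial_symmetric[symmetric])
qed auto

lemma sum_by_card:
  fixes g :: "nat \<Rightarrow> 'a::comm_semiring_1"
  assumes "finite S" and "D \<subseteq> Pow S"
  shows "(\<Sum>A\<in>D. g (card A)) = (\<Sum>i\<le>card S. of_nat (ideal_f D i) * g i)"
proof -
  have "finite D"
    using assms finite_subset by blast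
  moreover have "card ` D \<subseteq> {..card S}"
    using assms by (auto intro: card_mono)
  ultimately have "(\<Sum>A\<in>D. g (card A)) = (\<Sum>i\<le>card S. \<Sum>A\<in>{A \<in> D. card A = i}. g (card A))"
    using sum.group[of D "{..card S}" card "\<lambda>A. g (card A)"] by simp
  also have "\<dots> = (\<Sum>i\<le>card S. of_nat (ideal_f D i) * g i)"
    by (simp add: ideal_f_def)
  finally show ?thesis .
qed

lemma bier_faces_with_vertices_eq:
  assumes "j < n"
  shows "{F \<in> bier_faces n D. bier_face_vertices n F = j} =
    (SIGMA B:D. {C. B \<subseteq> C \<and> C \<subseteq> {1..n} \<and> card C = card B + (n - j)}) -
    prod.swap ` (SIGMA C:D. {B. B \<subseteq> C \<and> card C = card B + (n - j)})"
proof (rule set_eqI)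
  fix F :: "nat set \<times> nat set"
  obtain B C where F: "F = (B, C)"
    by fastforce
  show "F \<in> {F \<in> bier_faces n D. bier_face_vertices n F = j} \<longleftrightarrow>
    F \<in> (SIGMA B:D. {C. B \<subseteq> C \<and> C \<subseteq> {1..n} \<and> card C = card B + (n - j)}) -
      prod.swap ` (SIGMA C:D. {B. B \<subseteq> C \<and> card C = card B + (n - j)})"
  proof (cases "B \<subseteq> C \<and> C \<subseteq> {1..n}")
    case True
    then have "card B \<le> card C" and "card C \<le> n"
      using card_mono[of C B] card_mono[of "{1..n}" C] finite_subset by auto
    moreover have "B \<noteq> C" if "card C = card B + (n - j)"
      using that assms by auto
    ultimately show ?thesis
      using True assms by (auto simp: F bier_faces_def bier_face_vertices_def)
  qed (auto simp: F bier_faces_def)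
qed

lemma bier_f_eq_sum_ideal_f:
  assumes "D \<subseteq> Pow {1..n}" and "\<forall>A\<in>D. \<forall>B. B \<subseteq> A \<longrightarrow> B \<in> D" and "j < n"
  shows "int (bier_f n D j) =
    (\<Sum>i\<le>n. int (ideal_f D i) * (int ((n - i) choose (n - j)) - int (i choose (n - j))))"
proof -
  define k where "k = n - j"
  define P where "P = (SIGMA B:D. {C. B \<subseteq> C \<and> C \<subseteq> {1..n} \<and> card C = card B + k})"
  define Q where "Q = prod.swap ` (SIGMA C:D. {B. B \<subseteq> C \<and> card C = card B + k})"
  have "finite D"
    using assms(1) finite_subset by blast
  have "Q \<subseteq> P"
    using assms(1,2) unfolding P_def Q_def by auto
  have "P \<subseteq> Pow {1..n} \<times> Pow {1..n}"
    using assms(1) unfolding P_def by auto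
  then have "finite P"
    using finite_subset by blast
  have "card P = (\<Sum>B\<in>D. (n - card B) choose k)"
    unfolding P_def using \<open>finite D\<close> assms(1)
    by (auto simp: card_supersets_with_card intro!: sum.cong)
  moreover have "card Q = (\<Sum>C\<in>D. card C choose k)"
  proof -
    have "finite C" if "C \<in> D" for C
      using that assms(1) finite_subset by blast
    then show ?thesis
      unfolding Q_def using \<open>finite D\<close>
      by (simp add: card_image card_subsets_with_codim)
  qed
  ultimately have "int (bier_f n D j) = (\<Sum>A\<in>D. int ((n - card A) choose k) - int (card A choose k))"
    using \<open>Q \<subseteq> P\<close> \<open>finite P\<close> card_mono[OF \<open>finite P\<close> \<open>Q \<subseteq> P\<close>]
    by (simp add: bier_f_def bier_faces_with_vertices_eq[OF assms(3)] P_def Q_def k_def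
        card_Diff_subset finite_subset of_nat_diff sum_subtractf)
  also have "\<dots> = (\<Sum>i\<le>n. int (ideal_f D i) * (int ((n - i) choose k) - int (i choose k)))"
    using sum_by_card[of "{1..n}" D "\<lambda>i. int ((n - i) choose k) - int (i choose k)"] assms(1)
    by simp
  finally show ?thesis
    unfolding k_def .
qed

lemma sum_mirror_symmetric_times_antisymmetric:
  fixes g d :: "nat \<Rightarrow> 'a::{idom, ring_char_0}"
  assumes "\<And>i. i \<le> n \<Longrightarrow> g (n - i) = g i"
    and "\<And>i. i \<le> n \<Longrightarrow> d (n - i) = - d i"
  shows "(\<Sum>i\<le>n. g i * d i) = 0"
proof -
  have "(\<Sum>i\<le>n. g i * d i) = (\<Sum>i\<le>n. g (n - i) * d (n - i))"
    by (rule sum.reindex_bij_witness[where i="\<lambda>i. n - i" and j="\<lambda>i. n - i"]) auto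
  also have "\<dots> = - (\<Sum>i\<le>n. g i * d i)"
    using assms by (simp add: sum_negf)
  finally show ?thesis
    by simp
qed

lemma mirror_symmetric_of_lower_half:
  fixes n i :: nat
  assumes "\<forall>i \<le> (n - 1) div 2. g i = g (n - i)" and "i \<le> n"
  shows "g (n - i) = g i"
proof -
  consider "i \<le> (n - 1) div 2" | "n - i \<le> (n - 1) div 2" | "n - i = i"
    using assms(2) by linarith
  then show ?thesis
  proof cases
    case 2
    with assms have "g (n - i) = g (n - (n - i))"
      by blast
    with assms(2) show ?thesis
      by simp
  qed (use assms in auto)
qed

theorem corollary10:
  fixes n :: nat and D D' :: "nat set set"
  assumes "n \<ge> 2"
    and "proper_ideal n D" and "proper_ideal n D'"
    and "\<forall>i \<le> (n - 1) div 2.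
           int (ideal_f D i) - int (ideal_f D (n - i)) =
           int (ideal_f D' i) - int (ideal_f D' (n - i))"
  shows "\<forall>j \<le> n - 1. bier_f n D j = bier_f n D' j"
proof (intro allI impI)
  fix j
  assume "j \<le> n - 1"
  with assms(1) have "j < n"
    by simp
  define g where "g i = int (ideal_f D i) - int (ideal_f D' i)" for i
  have "\<forall>i \<le> (n - 1) div 2. g i = g (n - i)"
    using assms(4) unfolding g_def by (auto simp: algebra_simps)
  then have g_mirror: "g (n - i) = g i" if "i \<le> n" for i
    using mirror_symmetric_of_lower_half that by blast
  have "int (bier_f n D j) - int (bier_f n D' j) =
      (\<Sum>i\<le>n. g i * (int ((n - i) choose (n - j)) - int (i choose (n - j))))"
    using assms(2,3) \<open>j < n\<close> unfolding proper_ideal_def g_def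
    by (simp add: bier_f_eq_sum_ideal_f sum_subtractf[symmetric] algebra_simps)
  also have "\<dots> = 0"
    by (rule sum_mirror_symmetric_times_antisymmetric) (simp_all add: g_mirror)
  finally show "bier_f n D j = bier_f n D' j"
    by simp
qed

end
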